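(* Let $r_1,r_2$ be positive integers. Then $\psi_{d,\min}(M_{r_1,r_2}(K_2))=2$ if and only if $r_1\ge 2$ and $r_2\ge 2$. Moreover, if $r_1,r_2\ge 2$ then there is a homomorphism $M_{r_1,r_2}(K_2)\to S_4$, while for all positive integers $r$ and $m$ there is no homomorphism $M_{1,r}(K_2)\to S_m$ and no homomorphism $M_{r,1}(K_2)\to S_m$.
   Context: For a graph $G$ and positive integer $r$, the generalized Mycielskian $M_r(G)$ has vertex set $\{(v,i):v\in V(G),0\le i\le r-1\}\cup\{z\}$, with $(u,i)$ adjacent to $(v,j)$ iff $\{u,v\}\in E(G)$ and ($|i-j|=1$ or $i=j=0$), and $z$ adjacent to all $(v,r-1)$, $v\in V(G)$. $M_{r_1,r_2}(G)=M_{r_2}(M_{r_1}(G))$. For a digraph $D$, $N_+[v]=\{v\}\cup\{u:(v,u)\in E(D)\}$, $c(U)=\{c(u):u\in U\}$, and $\psi_d(D)=\min_c\max_v|c(N_+[v])|$ over proper colorings $c$ of the underlying graph; $\psi_{d,\min}(G)$ is the minimum of $\psi_d(\vec G)$ over all orientations $\vec G$ of $G$. The symmetric shift graph $S_m$ has vertex set $\{(i,j):1\le i,j\le m,\ i\ne j\}$, and $(i,j)$ is adjacent to $(k,\ell)$ iff $j=k$ or $i=\ell$. *)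

theory Defs
  imports Main
begin

type_synonym 'a graph = "'a set \<times> 'a set set"

definition gverts :: "'a graph \<Rightarrow> 'a set" where "gverts G = fst G"
definition gedges :: "'a graph \<Rightarrow> 'a set set" where "gedges G = snd G"

definition K2 :: "nat graph" where
  "K2 = ({0, 1}, {{0, 1}})"

datatype 'a myc_vertex = MV 'a nat | Apex

definition mycielski :: "nat \<Rightarrow> 'a graph \<Rightarrow> 'a myc_vertex graph" where
  "mycielski r G =
     ({MV v i | v i. v \<in> gverts G \<and> i < r} \<union> {Apex},
      {{MV u i, MV v j} | u v i j. {u, v} \<in> gedges G \<and> u \<in> gverts G \<and> v \<in> gverts G
          \<and> i < r \<and> j < r \<and> (i = j + 1 \<or> j = i + 1 \<or> (i = 0 \<and> j = 0))}
      \<union> {{Apex, MV v (r - 1)} | v. v \<in> gverts G})"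

definition mycielski2 :: "nat \<Rightarrow> nat \<Rightarrow> 'a graph \<Rightarrow> 'a myc_vertex myc_vertex graph" where
  "mycielski2 r1 r2 G = mycielski r2 (mycielski r1 G)"

definition shift_graph :: "nat \<Rightarrow> (nat \<times> nat) graph" where
  "shift_graph m =
     ({(i, j). 1 \<le> i \<and> i \<le> m \<and> 1 \<le> j \<and> j \<le> m \<and> i \<noteq> j},
      {{(i, j), (k, l)} | i j k l.
          1 \<le> i \<and> i \<le> m \<and> 1 \<le> j \<and> j \<le> m \<and> i \<noteq> j \<and>
          1 \<le> k \<and> k \<le> m \<and> 1 \<le> l \<and> l \<le> m \<and> k \<noteq> l \<and>
          (j = k \<or> i = l)})"

definition graph_hom :: "('a \<Rightarrow> 'b) \<Rightarrow> 'a graph \<Rightarrow> 'b graph \<Rightarrow> bool" where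
  "graph_hom f G H \<longleftrightarrow>
     (\<forall>v\<in>gverts G. f v \<in> gverts H) \<and>
     (\<forall>u v. {u, v} \<in> gedges G \<longrightarrow> {f u, f v} \<in> gedges H)"

definition orientation :: "'a graph \<Rightarrow> ('a \<times> 'a) set \<Rightarrow> bool" where
  "orientation G A \<longleftrightarrow>
     A \<subseteq> {(u, v). u \<noteq> v \<and> {u, v} \<in> gedges G} \<and>
     (\<forall>u v. u \<noteq> v \<and> {u, v} \<in> gedges G \<longrightarrow> ((u, v) \<in> A \<longleftrightarrow> (v, u) \<notin> A))"

definition proper_coloring :: "'a graph \<Rightarrow> ('a \<Rightarrow> nat) \<Rightarrow> bool" where
  "proper_coloring G c \<longleftrightarrow> (\<forall>u v. u \<noteq> v \<and> {u, v} \<in> gedges G \<longrightarrow> c u \<noteq> c v)"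

definition out_nbhd :: "('a \<times> 'a) set \<Rightarrow> 'a \<Rightarrow> 'a set" where
  "out_nbhd A v = {v} \<union> {u. (v, u) \<in> A}"

definition psi_d :: "'a graph \<Rightarrow> ('a \<times> 'a) set \<Rightarrow> nat" where
  "psi_d G A = (LEAST k. \<exists>c. proper_coloring G c \<and>
                   (\<forall>v\<in>gverts G. card (c ` out_nbhd A v) \<le> k))"

definition psi_d_min :: "'a graph \<Rightarrow> nat" where
  "psi_d_min G = (LEAST k. \<exists>A. orientation G A \<and> psi_d G A = k)"

end

theory Submission
  imports Defs
begin

text \<open>\<open>\<psi>\<^sub>d\<^sub>,\<^sub>m\<^sub>i\<^sub>n(G) = 2\<close> (for a finite graph with an edge) exactly when \<open>G\<close> maps
  homomorphically into the shift graph on \<open>\<nat>\<close>: given an orientation and a colouring \<open>c\<close> with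
  two colours on every \<open>N\<^sub>+[v]\<close>, label \<open>v\<close> by \<open>c v\<close> and the common colour of its out-neighbours;
  conversely orient \<open>(a, b) \<rightarrow> (b, c)\<close> and colour by the first coordinate. Two rigidity
  properties of the shift graph then rule out \<open>M\<^sub>1\<^sub>,\<^sub>r(K\<^sub>2)\<close> and \<open>M\<^sub>r\<^sub>,\<^sub>1(K\<^sub>2)\<close>: adjacent
  vertices have at most one common neighbour, which freezes the labels of the triangle
  \<open>M\<^sub>1(K\<^sub>2)\<close> through all layers of \<open>M\<^sub>r\<close> until the apex clashes with them; and every triangle
  through \<open>(a, b)\<close> contains exactly one vertex \<open>(b, _)\<close>, which turns a labelling of \<open>M\<^sub>1(H)\<close>
  into a 2-colouring of \<open>H\<close>, impossible for \<open>H = M\<^sub>r(K\<^sub>2)\<close>. For \<open>r\<^sub>1, r\<^sub>2 \<ge> 2\<close> the graph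
  \<open>M\<^sub>r\<^sub>1\<^sub>,\<^sub>r\<^sub>2(K\<^sub>2)\<close> folds onto \<open>M\<^sub>2\<^sub>,\<^sub>2(K\<^sub>2)\<close>, which has an explicit map to \<open>S\<^sub>4\<close>.\<close>

section \<open>The shift graph on the natural numbers\<close>

definition shift_adj :: "nat \<times> nat \<Rightarrow> nat \<times> nat \<Rightarrow> bool" where
  "shift_adj P Q \<longleftrightarrow> snd P = fst Q \<or> fst P = snd Q"

lemma shift_adj_irrefl: "fst P \<noteq> snd P \<Longrightarrow> \<not> shift_adj P P"
  by (simp add: shift_adj_def)

lemma shift_adj_common_neighbour_unique:
  assumes "fst P \<noteq> snd P" "fst Q \<noteq> snd Q" "fst S \<noteq> snd S" "fst T \<noteq> snd T"
    and "shift_adj Q S" "shift_adj P Q" "shift_adj P S" "shift_adj T Q" "shift_adj T S"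
  shows "T = P"
  using assms by (cases P; cases Q; cases S; cases T) (auto simp: shift_adj_def)

lemma shift_triangle_out_in:
  assumes "fst P \<noteq> snd P" "fst Q \<noteq> snd Q" "fst S \<noteq> snd S"
    and "shift_adj P Q" "shift_adj P S" "shift_adj Q S"
  shows "(fst Q = snd P) \<noteq> (fst S = snd P)"
  using assms by (cases P; cases Q; cases S) (auto simp: shift_adj_def)

definition shift_labelling :: "'a graph \<Rightarrow> ('a \<Rightarrow> nat \<times> nat) \<Rightarrow> bool" where
  "shift_labelling G f \<longleftrightarrow> (\<forall>v\<in>gverts G. fst (f v) \<noteq> snd (f v)) \<and>
     (\<forall>u v. u \<noteq> v \<and> {u, v} \<in> gedges G \<longrightarrow> shift_adj (f u) (f v))"

lemma shift_labellingD:
  assumes "shift_labelling G f"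
  shows "v \<in> gverts G \<Longrightarrow> fst (f v) \<noteq> snd (f v)"
    and "{u, v} \<in> gedges G \<Longrightarrow> u \<noteq> v \<Longrightarrow> shift_adj (f u) (f v)"
  using assms by (simp_all add: shift_labelling_def)

lemma shift_graph_vertexI:
  "fst P \<noteq> snd P \<Longrightarrow> fst P \<in> {1..m} \<Longrightarrow> snd P \<in> {1..m} \<Longrightarrow> P \<in> gverts (shift_graph m)"
  by (cases P) (auto simp: shift_graph_def gverts_def)

lemma shift_graph_edgeI:
  "fst P \<noteq> snd P \<Longrightarrow> fst Q \<noteq> snd Q \<Longrightarrow> fst P \<in> {1..m} \<Longrightarrow> snd P \<in> {1..m}
    \<Longrightarrow> fst Q \<in> {1..m} \<Longrightarrow> snd Q \<in> {1..m} \<Longrightarrow> shift_adj P Q \<Longrightarrow> {P, Q} \<in> gedges (shift_graph m)"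
  by (cases P; cases Q) (auto simp: shift_graph_def gedges_def shift_adj_def)

lemma shift_labelling_of_graph_hom:
  assumes "graph_hom f G (shift_graph m)"
  shows "shift_labelling G f"
  unfolding shift_labelling_def
proof (intro conjI allI impI ballI)
  fix v assume "v \<in> gverts G"
  then have "f v \<in> gverts (shift_graph m)" using assms by (simp add: graph_hom_def)
  then show "fst (f v) \<noteq> snd (f v)" by (auto simp: shift_graph_def gverts_def)
next
  fix u v assume "u \<noteq> v \<and> {u, v} \<in> gedges G"
  then have "{f u, f v} \<in> gedges (shift_graph m)" using assms by (simp add: graph_hom_def)
  then show "shift_adj (f u) (f v)"
    by (auto simp: shift_graph_def gedges_def shift_adj_def doubleton_eq_iff)
qed

section \<open>Orientations with two colours per closed out-neighbourhood\<close>

definition finite_graph :: "'a graph \<Rightarrow> bool" where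
  "finite_graph G \<longleftrightarrow> finite (gverts G) \<and> (\<forall>e\<in>gedges G. e \<subseteq> gverts G)"

lemma finite_graph_edge_verts:
  "finite_graph G \<Longrightarrow> {u, v} \<in> gedges G \<Longrightarrow> u \<in> gverts G \<and> v \<in> gverts G"
  by (auto simp: finite_graph_def)

lemma orientation_arcD: "orientation G A \<Longrightarrow> (u, v) \<in> A \<Longrightarrow> u \<noteq> v \<and> {u, v} \<in> gedges G"
  by (auto simp: orientation_def)

lemma orientation_edge_arc:
  "orientation G A \<Longrightarrow> {u, v} \<in> gedges G \<Longrightarrow> u \<noteq> v \<Longrightarrow> (u, v) \<in> A \<or> (v, u) \<in> A"
  by (auto simp: orientation_def)

lemma finite_out_nbhd:
  assumes "finite_graph G" "orientation G A" "v \<in> gverts G"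
  shows "finite (out_nbhd A v)" and "out_nbhd A v \<subseteq> gverts G"
proof -
  show sub: "out_nbhd A v \<subseteq> gverts G"
    using assms by (auto simp: out_nbhd_def dest: orientation_arcD finite_graph_edge_verts)
  then show "finite (out_nbhd A v)"
    using assms(1) finite_subset by (auto simp: finite_graph_def)
qed

lemma orientation_by_order:
  fixes h :: "'a \<Rightarrow> 'b::linorder"
  assumes "finite_graph G" "inj_on h (gverts G)"
  shows "orientation G {(u, v). u \<noteq> v \<and> {u, v} \<in> gedges G \<and> h u < h v}"
  unfolding orientation_def
proof (intro conjI allI impI subsetI)
  fix u v assume uv: "u \<noteq> v \<and> {u, v} \<in> gedges G"
  then have "h u \<noteq> h v"
    using assms by (metis finite_graph_edge_verts inj_onD)
  then show "((u, v) \<in> {(u, v). u \<noteq> v \<and> {u, v} \<in> gedges G \<and> h u < h v}) \<longleftrightarrow>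
      (v, u) \<notin> {(u, v). u \<noteq> v \<and> {u, v} \<in> gedges G \<and> h u < h v}"
    using uv by (auto simp: insert_commute)
qed auto

lemma finite_graph_injective_labelling:
  assumes "finite_graph G"
  obtains h :: "'a \<Rightarrow> nat" where "inj_on h (gverts G)"
  using assms finite_imp_inj_to_nat_seg[of "gverts G"] that unfolding finite_graph_def by blast

lemma orientation_exists:
  assumes "finite_graph G"
  shows "\<exists>A. orientation G A"
proof -
  obtain h :: "'a \<Rightarrow> nat" where "inj_on h (gverts G)"
    using finite_graph_injective_labelling[OF assms] .
  then show ?thesis using orientation_by_order[OF assms] by blast
qed

lemma psi_d_witness:
  assumes G: "finite_graph G" and A: "orientation G A"
  obtains c where "proper_coloring G c" "\<forall>v\<in>gverts G. card (c ` out_nbhd A v) \<le> psi_d G A"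
proof -
  obtain h :: "'a \<Rightarrow> nat" where h: "inj_on h (gverts G)"
    using finite_graph_injective_labelling[OF G] .
  have "proper_coloring G h"
    using G h by (auto simp: proper_coloring_def dest: finite_graph_edge_verts inj_onD)
  moreover have "card (h ` out_nbhd A v) \<le> card (h ` gverts G)" if "v \<in> gverts G" for v
    using G finite_out_nbhd(2)[OF G A that] by (intro card_mono) (auto simp: finite_graph_def)
  ultimately have "\<exists>k c. proper_coloring G c \<and> (\<forall>v\<in>gverts G. card (c ` out_nbhd A v) \<le> k)"
    by blast
  from LeastI_ex[OF this] show ?thesis
    using that unfolding psi_d_def by blast
qed

lemma psi_d_le:
  "proper_coloring G c \<Longrightarrow> \<forall>v\<in>gverts G. card (c ` out_nbhd A v) \<le> k \<Longrightarrow> psi_d G A \<le> k"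
  unfolding psi_d_def by (rule Least_le) blast

lemma psi_d_ge_2:
  assumes G: "finite_graph G" and A: "orientation G A" and e: "{x, y} \<in> gedges G" "x \<noteq> y"
  shows "2 \<le> psi_d G A"
proof -
  obtain c where c: "proper_coloring G c" "\<forall>v\<in>gverts G. card (c ` out_nbhd A v) \<le> psi_d G A"
    using psi_d_witness[OF G A] .
  obtain u v where uv: "(u, v) \<in> A"
    using orientation_edge_arc[OF A e] by blast
  then have u: "u \<in> gverts G" and "c u \<noteq> c v"
    using G c(1) by (auto simp: proper_coloring_def dest: orientation_arcD[OF A] finite_graph_edge_verts)
  then have "2 = card {c u, c v}" by simp
  also have "\<dots> \<le> card (c ` out_nbhd A u)"
    using uv finite_out_nbhd(1)[OF G A u] by (intro card_mono) (auto simp: out_nbhd_def)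
  also have "\<dots> \<le> psi_d G A" using c(2) u by blast
  finally show ?thesis .
qed

text \<open>\<open>N\<^sub>+[u]\<close> has only two colours, one of them \<open>c u\<close>, so all out-neighbours of \<open>u\<close> share
  the other one; \<open>SOME\<close> picks it, and \<open>Suc (c u)\<close> is a dummy for vertices without out-neighbours.\<close>
lemma shift_labelling_of_psi_d_le_2:
  assumes G: "finite_graph G" and A: "orientation G A" and c: "proper_coloring G c"
    and two: "\<forall>v\<in>gverts G. card (c ` out_nbhd A v) \<le> 2"
  shows "\<exists>f. shift_labelling G f"
proof -
  define d where "d u = (if \<exists>w. (u, w) \<in> A then c (SOME w. (u, w) \<in> A) else Suc (c u))" for u
  have arc_colour: "c u \<noteq> c v" if "(u, v) \<in> A" for u v
    using c orientation_arcD[OF A that] by (auto simp: proper_coloring_def)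
  have d_arc: "d u = c v" if uv: "(u, v) \<in> A" for u v
  proof -
    define w where "w = (SOME w. (u, w) \<in> A)"
    have uw: "(u, w) \<in> A" unfolding w_def using uv by (rule someI)
    have u: "u \<in> gverts G"
      using G orientation_arcD[OF A uv] by (auto dest: finite_graph_edge_verts)
    have "card {c u, c v, c w} \<le> card (c ` out_nbhd A u)"
      using uv uw finite_out_nbhd(1)[OF G A u] by (intro card_mono) (auto simp: out_nbhd_def)
    also have "\<dots> \<le> 2" using two u by blast
    finally have "c w = c v"
      using arc_colour[OF uv] arc_colour[OF uw] by (auto simp: card_insert_if split: if_splits)
    then show ?thesis using uv by (auto simp: d_def w_def)
  qed
  have "shift_labelling G (\<lambda>v. (c v, d v))"
    unfolding shift_labelling_def
  proof (intro conjI allI impI ballI)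
    fix u show "fst (c u, d u) \<noteq> snd (c u, d u)"
    proof (cases "\<exists>w. (u, w) \<in> A")
      case True
      then obtain w where "(u, w) \<in> A" by blast
      then show ?thesis using arc_colour d_arc by simp
    qed (simp add: d_def)
  next
    fix u v assume "u \<noteq> v \<and> {u, v} \<in> gedges G"
    then have "(u, v) \<in> A \<or> (v, u) \<in> A" using orientation_edge_arc[OF A] by blast
    then show "shift_adj (c u, d u) (c v, d v)"
      using d_arc by (auto simp: shift_adj_def)
  qed
  then show ?thesis by blast
qed

text \<open>An edge between \<open>(a, b)\<close> and \<open>(b, a)\<close> could be oriented either way; the smaller first
  coordinate breaks the tie.\<close>
lemma psi_d_le_2_of_shift_labelling:
  assumes G: "finite_graph G" and f: "shift_labelling G f"
  shows "\<exists>A. orientation G A \<and> psi_d G A \<le> 2"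
proof -
  define A where "A = {(u, v). u \<noteq> v \<and> {u, v} \<in> gedges G \<and> snd (f u) = fst (f v) \<and>
      (fst (f u) = snd (f v) \<longrightarrow> fst (f u) < fst (f v))}"
  have fst_differ: "fst (f u) \<noteq> fst (f v)" if "{u, v} \<in> gedges G" "u \<noteq> v" for u v
  proof -
    have "shift_adj (f u) (f v)" "fst (f u) \<noteq> snd (f u)" "fst (f v) \<noteq> snd (f v)"
      using shift_labellingD[OF f] finite_graph_edge_verts[OF G that(1)] that by auto
    then show ?thesis by (auto simp: shift_adj_def)
  qed
  have "orientation G A"
    unfolding orientation_def
  proof (intro conjI allI impI)
    fix u v assume uv: "u \<noteq> v \<and> {u, v} \<in> gedges G"
    then have "shift_adj (f u) (f v)" "fst (f u) \<noteq> fst (f v)"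
      using shift_labellingD(2)[OF f] fst_differ by auto
    then have "(snd (f u) = fst (f v) \<and> (fst (f u) = snd (f v) \<longrightarrow> fst (f u) < fst (f v))) \<longleftrightarrow>
        \<not> (snd (f v) = fst (f u) \<and> (fst (f v) = snd (f u) \<longrightarrow> fst (f v) < fst (f u)))"
      unfolding shift_adj_def by linarith
    moreover have "u \<noteq> v" "v \<noteq> u" "{u, v} \<in> gedges G" "{v, u} \<in> gedges G"
      using uv by (auto simp: insert_commute)
    ultimately show "((u, v) \<in> A) = ((v, u) \<notin> A)"
      unfolding A_def by simp
  qed (auto simp: A_def)
  moreover have "proper_coloring G (\<lambda>v. fst (f v))"
    using fst_differ by (auto simp: proper_coloring_def)
  moreover have "card ((\<lambda>v. fst (f v)) ` out_nbhd A v) \<le> 2" for v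
  proof -
    have "card ((\<lambda>v. fst (f v)) ` out_nbhd A v) \<le> card {fst (f v), snd (f v)}"
      by (rule card_mono) (auto simp: out_nbhd_def A_def)
    also have "\<dots> \<le> 2" by (simp add: card_insert_if)
    finally show ?thesis .
  qed
  ultimately show ?thesis using psi_d_le by blast
qed

theorem psi_d_min_eq_2_iff_shift_labelling:
  assumes G: "finite_graph G" and e: "{x, y} \<in> gedges G" "x \<noteq> y"
  shows "psi_d_min G = 2 \<longleftrightarrow> (\<exists>f. shift_labelling G f)"
proof -
  have ex: "\<exists>k A. orientation G A \<and> psi_d G A = k"
    using orientation_exists[OF G] by blast
  obtain A where A: "orientation G A" "psi_d G A = psi_d_min G"
    using LeastI_ex[OF ex] unfolding psi_d_min_def by blast
  have "psi_d_min G \<ge> 2"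
    using psi_d_ge_2[OF G A(1) e] A(2) by simp
  moreover have "psi_d_min G \<le> psi_d G B" if "orientation G B" for B
    unfolding psi_d_min_def using that by (intro Least_le) blast
  ultimately have "psi_d_min G = 2 \<longleftrightarrow> (\<exists>B. orientation G B \<and> psi_d G B \<le> 2)"
    using A by (metis le_antisym le_trans)
  also have "\<dots> \<longleftrightarrow> (\<exists>f. shift_labelling G f)"
  proof
    assume "\<exists>B. orientation G B \<and> psi_d G B \<le> 2"
    then obtain B c where "orientation G B" "proper_coloring G c"
        "\<forall>v\<in>gverts G. card (c ` out_nbhd B v) \<le> 2"
      by (metis psi_d_witness[OF G] le_trans)
    then show "\<exists>f. shift_labelling G f"
      using shift_labelling_of_psi_d_le_2[OF G] by blast
  qed (use psi_d_le_2_of_shift_labelling[OF G] in blast)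
  finally show ?thesis .
qed

section \<open>Generalized Mycielskians\<close>

lemma gverts_mycielski: "gverts (mycielski r G) = {MV v i | v i. v \<in> gverts G \<and> i < r} \<union> {Apex}"
  by (simp add: mycielski_def gverts_def)

lemma gedges_mycielski: "gedges (mycielski r G) =
      {{MV u i, MV v j} | u v i j. {u, v} \<in> gedges G \<and> u \<in> gverts G \<and> v \<in> gverts G
          \<and> i < r \<and> j < r \<and> (i = j + 1 \<or> j = i + 1 \<or> (i = 0 \<and> j = 0))}
      \<union> {{Apex, MV v (r - 1)} | v. v \<in> gverts G}"
  by (simp add: mycielski_def gedges_def)

lemma MV_in_gverts_mycielski: "v \<in> gverts G \<Longrightarrow> i < r \<Longrightarrow> MV v i \<in> gverts (mycielski r G)"
  by (auto simp: gverts_mycielski)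

lemma Apex_in_gverts_mycielski: "Apex \<in> gverts (mycielski r G)"
  by (auto simp: gverts_mycielski)

lemma MV_edge_mycielski:
  "{u, v} \<in> gedges G \<Longrightarrow> u \<in> gverts G \<Longrightarrow> v \<in> gverts G \<Longrightarrow> i < r \<Longrightarrow> j < r
    \<Longrightarrow> i = j + 1 \<or> j = i + 1 \<or> (i = 0 \<and> j = 0) \<Longrightarrow> {MV u i, MV v j} \<in> gedges (mycielski r G)"
  unfolding gedges_mycielski by blast

lemma Apex_edge_mycielski: "v \<in> gverts G \<Longrightarrow> {Apex, MV v (r - 1)} \<in> gedges (mycielski r G)"
  unfolding gedges_mycielski by blast

lemma mycielski_edgeE:
  assumes "{x, y} \<in> gedges (mycielski r G)"
  obtains u v i j where "{u, v} \<in> gedges G" "u \<in> gverts G" "v \<in> gverts G" "i < r" "j < r"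
     "i = j + 1 \<or> j = i + 1 \<or> (i = 0 \<and> j = 0)"
     "(x = MV u i \<and> y = MV v j) \<or> (x = MV v j \<and> y = MV u i)"
  | v where "v \<in> gverts G" "(x = Apex \<and> y = MV v (r - 1)) \<or> (y = Apex \<and> x = MV v (r - 1))"
  using assms unfolding gedges_mycielski by (auto simp: doubleton_eq_iff)

lemma finite_graph_mycielski:
  assumes "finite_graph G" "r \<ge> 1"
  shows "finite_graph (mycielski r G)"
proof -
  have "gverts (mycielski r G) = (\<lambda>(v, i). MV v i) ` (gverts G \<times> {..<r}) \<union> {Apex}"
    by (auto simp: gverts_mycielski)
  then show ?thesis
    using assms unfolding finite_graph_def gedges_mycielski gverts_mycielski by auto
qed

lemma graph_hom_comp: "graph_hom f G H \<Longrightarrow> graph_hom g H K \<Longrightarrow> graph_hom (g \<circ> f) G K"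
  by (simp add: graph_hom_def)

lemma graph_hom_mycielski:
  assumes h: "graph_hom h G H"
  shows "graph_hom (map_myc_vertex h) (mycielski r G) (mycielski r H)"
  unfolding graph_hom_def
proof (intro conjI ballI allI impI)
  fix v assume "v \<in> gverts (mycielski r G)"
  then show "map_myc_vertex h v \<in> gverts (mycielski r H)"
    using h by (auto simp: gverts_mycielski graph_hom_def)
next
  fix x y assume "{x, y} \<in> gedges (mycielski r G)"
  then show "{map_myc_vertex h x, map_myc_vertex h y} \<in> gedges (mycielski r H)"
  proof (cases rule: mycielski_edgeE)
    case (1 u v i j)
    then have "{h u, h v} \<in> gedges H" "h u \<in> gverts H" "h v \<in> gverts H"
      using h by (auto simp: graph_hom_def)
    from MV_edge_mycielski[OF this 1(4-6)] 1(7) show ?thesis by (auto simp: insert_commute)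
  next
    case (2 v)
    then have "h v \<in> gverts H" using h by (auto simp: graph_hom_def)
    from Apex_edge_mycielski[OF this, of r] 2(2) show ?thesis by (auto simp: insert_commute)
  qed
qed

definition lower_layers :: "nat \<Rightarrow> 'a myc_vertex \<Rightarrow> 'a myc_vertex" where
  "lower_layers d x = (case x of MV v i \<Rightarrow> MV v (i - d) | Apex \<Rightarrow> Apex)"

text \<open>Layer 0 carries a copy of \<open>G\<close>, so merging the bottom layers into it keeps every edge.\<close>
lemma graph_hom_lower_layers:
  assumes "1 \<le> r'" "r' \<le> r"
  shows "graph_hom (lower_layers (r - r')) (mycielski r G) (mycielski r' G)"
  unfolding graph_hom_def
proof (intro conjI ballI allI impI)
  fix v assume "v \<in> gverts (mycielski r G)"
  then show "lower_layers (r - r') v \<in> gverts (mycielski r' G)"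
    using assms by (auto simp: gverts_mycielski lower_layers_def)
next
  fix x y assume "{x, y} \<in> gedges (mycielski r G)"
  then show "{lower_layers (r - r') x, lower_layers (r - r') y} \<in> gedges (mycielski r' G)"
  proof (cases rule: mycielski_edgeE)
    case (1 u v i j)
    have "{MV u (i - (r - r')), MV v (j - (r - r'))} \<in> gedges (mycielski r' G)"
      by (rule MV_edge_mycielski[OF 1(1-3)]) (use 1(4-6) assms in auto)
    then show ?thesis using 1(7) by (auto simp: lower_layers_def insert_commute)
  next
    case (2 v)
    have "r - 1 - (r - r') = r' - 1" using assms by simp
    with Apex_edge_mycielski[OF 2(1), of r'] 2(2) show ?thesis
      by (auto simp: insert_commute lower_layers_def)
  qed
qed

section \<open>Obstructions to shift labellings\<close>

definition triangle :: "'a graph \<Rightarrow> 'a \<Rightarrow> 'a \<Rightarrow> 'a \<Rightarrow> bool" where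
  "triangle G x y z \<longleftrightarrow> distinct [x, y, z] \<and> {x, y, z} \<subseteq> gverts G \<and>
     {x, y} \<in> gedges G \<and> {y, z} \<in> gedges G \<and> {x, z} \<in> gedges G"

lemma triangle_rotate: "triangle G x y z \<Longrightarrow> triangle G y z x"
  by (auto simp: triangle_def insert_commute)

lemma triangle_mycielski_1:
  "{u, v} \<in> gedges G \<Longrightarrow> u \<in> gverts G \<Longrightarrow> v \<in> gverts G \<Longrightarrow> u \<noteq> v
    \<Longrightarrow> triangle (mycielski 1 G) (MV u 0) (MV v 0) Apex"
  unfolding triangle_def
  using MV_edge_mycielski[of u v G 0 1 0] Apex_edge_mycielski[of u G 1] Apex_edge_mycielski[of v G 1]
  by (auto simp: gverts_mycielski insert_commute)

lemma shift_labelling_mycielski_triangleD: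
  assumes f: "shift_labelling (mycielski r G) f" and T: "triangle G x y z"
  shows "w \<in> {x, y, z} \<Longrightarrow> i < r \<Longrightarrow> fst (f (MV w i)) \<noteq> snd (f (MV w i))"
    and "w \<in> {x, y, z} \<Longrightarrow> w' \<in> {x, y, z} \<Longrightarrow> w \<noteq> w' \<Longrightarrow> i < r \<Longrightarrow> j < r
      \<Longrightarrow> i = j + 1 \<or> j = i + 1 \<or> (i = 0 \<and> j = 0) \<Longrightarrow> shift_adj (f (MV w i)) (f (MV w' j))"
proof -
  have V: "w \<in> gverts G" if "w \<in> {x, y, z}" for w
    using T that by (auto simp: triangle_def)
  have E: "{w, w'} \<in> gedges G" if "w \<in> {x, y, z}" "w' \<in> {x, y, z}" "w \<noteq> w'" for w w'
    using T that by (auto simp: triangle_def insert_commute)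
  show "w \<in> {x, y, z} \<Longrightarrow> i < r \<Longrightarrow> fst (f (MV w i)) \<noteq> snd (f (MV w i))"
    using shift_labellingD(1)[OF f MV_in_gverts_mycielski[OF V]] by blast
  show "w \<in> {x, y, z} \<Longrightarrow> w' \<in> {x, y, z} \<Longrightarrow> w \<noteq> w' \<Longrightarrow> i < r \<Longrightarrow> j < r
      \<Longrightarrow> i = j + 1 \<or> j = i + 1 \<or> (i = 0 \<and> j = 0) \<Longrightarrow> shift_adj (f (MV w i)) (f (MV w' j))"
    using shift_labellingD(2)[OF f MV_edge_mycielski[OF E V V]] by blast
qed

lemma shift_labelling_mycielski_triangle_step:
  assumes f: "shift_labelling (mycielski r G) f" and T: "triangle G x y z" and i: "Suc i < r"
    and y: "f (MV y i) = f (MV y 0)" and z: "f (MV z i) = f (MV z 0)"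
  shows "f (MV x (Suc i)) = f (MV x 0)"
proof (rule shift_adj_common_neighbour_unique[of _ "f (MV y 0)" "f (MV z 0)"])
  note proper = shift_labelling_mycielski_triangleD(1)[OF f T]
  note adj = shift_labelling_mycielski_triangleD(2)[OF f T]
  have xyz: "distinct [x, y, z]" using T by (simp add: triangle_def)
  show "fst (f (MV x 0)) \<noteq> snd (f (MV x 0))" "fst (f (MV y 0)) \<noteq> snd (f (MV y 0))"
    "fst (f (MV z 0)) \<noteq> snd (f (MV z 0))" "fst (f (MV x (Suc i))) \<noteq> snd (f (MV x (Suc i)))"
    using proper i by auto
  show "shift_adj (f (MV y 0)) (f (MV z 0))" "shift_adj (f (MV x 0)) (f (MV y 0))"
    "shift_adj (f (MV x 0)) (f (MV z 0))"
    using adj xyz i by auto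
  show "shift_adj (f (MV x (Suc i))) (f (MV y 0))" "shift_adj (f (MV x (Suc i))) (f (MV z 0))"
    using adj[of x y "Suc i" i] adj[of x z "Suc i" i] xyz i y z by auto
qed

lemma shift_labelling_mycielski_triangle_layers:
  assumes f: "shift_labelling (mycielski r G) f" and T: "triangle G x y z" and "i < r"
  shows "f (MV x i) = f (MV x 0) \<and> f (MV y i) = f (MV y 0) \<and> f (MV z i) = f (MV z 0)"
  using \<open>i < r\<close>
proof (induction i)
  case (Suc i)
  have T': "triangle G y z x" "triangle G z x y"
    using triangle_rotate[OF T] triangle_rotate[OF triangle_rotate[OF T]] by auto
  from Suc show ?case
    using shift_labelling_mycielski_triangle_step[OF f] T T' by simp
qed simp

text \<open>All layers of a triangle carry the same labels, so the apex is a common neighbour of the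
  labels of \<open>x\<close> and \<open>y\<close>, hence has the label of \<open>z\<close> -- but it is also adjacent to it.\<close>
lemma no_shift_labelling_mycielski_triangle:
  assumes T: "triangle G x y z" and r: "r \<ge> 1"
  shows "\<not> shift_labelling (mycielski r G) f"
proof
  assume f: "shift_labelling (mycielski r G) f"
  note proper = shift_labelling_mycielski_triangleD(1)[OF f T]
  note adj = shift_labelling_mycielski_triangleD(2)[OF f T]
  have apex_adj: "shift_adj (f Apex) (f (MV w 0))" if "w \<in> {x, y, z}" for w
  proof -
    have "w \<in> gverts G" using T that by (auto simp: triangle_def)
    then have "shift_adj (f Apex) (f (MV w (r - 1)))"
      using shift_labellingD(2)[OF f Apex_edge_mycielski] by simp
    then show ?thesis
      using shift_labelling_mycielski_triangle_layers[OF f T, of "r - 1"] that r by auto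
  qed
  have xyz: "distinct [x, y, z]" using T by (simp add: triangle_def)
  have "f Apex = f (MV z 0)"
  proof (rule shift_adj_common_neighbour_unique[of _ "f (MV x 0)" "f (MV y 0)"])
    show "fst (f Apex) \<noteq> snd (f Apex)"
      using shift_labellingD(1)[OF f Apex_in_gverts_mycielski] .
    show "fst (f (MV z 0)) \<noteq> snd (f (MV z 0))" "fst (f (MV x 0)) \<noteq> snd (f (MV x 0))"
      "fst (f (MV y 0)) \<noteq> snd (f (MV y 0))"
      using proper r by auto
    show "shift_adj (f (MV x 0)) (f (MV y 0))" "shift_adj (f (MV z 0)) (f (MV x 0))"
      "shift_adj (f (MV z 0)) (f (MV y 0))"
      using adj xyz r by auto
    show "shift_adj (f Apex) (f (MV x 0))" "shift_adj (f Apex) (f (MV y 0))"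
      using apex_adj by auto
  qed
  then show False
    using apex_adj[of z] shift_adj_irrefl proper[of z 0] r by auto
qed

definition bipartite :: "'a graph \<Rightarrow> bool" where
  "bipartite G \<longleftrightarrow> (\<exists>side :: 'a \<Rightarrow> bool. \<forall>u\<in>gverts G. \<forall>v\<in>gverts G.
     u \<noteq> v \<and> {u, v} \<in> gedges G \<longrightarrow> side u \<noteq> side v)"

text \<open>Every vertex of layer 0 of \<open>M\<^sub>1(G)\<close> is adjacent to the apex, labelled \<open>(a, b)\<close>, and a
  triangle through \<open>(a, b)\<close> has exactly one vertex of the form \<open>(b, _)\<close>.\<close>
lemma bipartite_of_shift_labelling_mycielski_1:
  assumes f: "shift_labelling (mycielski 1 G) f"
  shows "bipartite G"
  unfolding bipartite_def
proof (intro exI ballI impI)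
  fix u v assume u: "u \<in> gverts G" and v: "v \<in> gverts G" and uv: "u \<noteq> v \<and> {u, v} \<in> gedges G"
  show "(fst (f (MV u 0)) = snd (f Apex)) \<noteq> (fst (f (MV v 0)) = snd (f Apex))"
  proof (rule shift_triangle_out_in)
    show "fst (f Apex) \<noteq> snd (f Apex)"
      using shift_labellingD(1)[OF f Apex_in_gverts_mycielski] .
    show "fst (f (MV u 0)) \<noteq> snd (f (MV u 0))" "fst (f (MV v 0)) \<noteq> snd (f (MV v 0))"
      using shift_labellingD(1)[OF f MV_in_gverts_mycielski] u v by auto
    show "shift_adj (f Apex) (f (MV u 0))" "shift_adj (f Apex) (f (MV v 0))"
      using shift_labellingD(2)[OF f Apex_edge_mycielski] u v by auto
    show "shift_adj (f (MV u 0)) (f (MV v 0))"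
      using shift_labellingD(2)[OF f MV_edge_mycielski, of u v 0 0] u v uv by auto
  qed
qed

text \<open>Each side assignment alternates along the edges \<open>(u, i + 1)(v, i)\<close> and \<open>(v, i + 1)(u, i)\<close>,
  so \<open>(u, r - 1)\<close> and \<open>(v, r - 1)\<close> lie on different sides, yet both are adjacent to the apex.\<close>
lemma not_bipartite_mycielski:
  assumes e: "{u, v} \<in> gedges G" "u \<in> gverts G" "v \<in> gverts G" "u \<noteq> v" and r: "r \<ge> 1"
  shows "\<not> bipartite (mycielski r G)"
proof
  assume "bipartite (mycielski r G)"
  then obtain side :: "'a myc_vertex \<Rightarrow> bool" where side: "side x \<noteq> side y"
    if "x \<in> gverts (mycielski r G)" "y \<in> gverts (mycielski r G)" "x \<noteq> y"
       "{x, y} \<in> gedges (mycielski r G)" for x y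
    unfolding bipartite_def by blast
  have layer: "side (MV w i) \<noteq> side (MV w' j)"
    if "{w, w'} \<in> gedges G" "w \<in> gverts G" "w' \<in> gverts G" "w \<noteq> w'" "i < r" "j < r"
       "i = j + 1 \<or> j = i + 1 \<or> (i = 0 \<and> j = 0)" for w w' i j
    using side[OF MV_in_gverts_mycielski MV_in_gverts_mycielski _ MV_edge_mycielski] that by simp
  have e': "{v, u} \<in> gedges G" using e(1) by (simp add: insert_commute)
  have split: "side (MV u i) \<noteq> side (MV v i)" if "i < r" for i
    using that
  proof (induction i)
    case 0
    then show ?case using layer[OF e, of 0 0] by simp
  next
    case (Suc i)
    then show ?case
      using layer[OF e, of "Suc i" i] layer[OF e' e(3,2) e(4)[symmetric], of "Suc i" i] by auto
  qed
  have "side Apex \<noteq> side (MV w (r - 1))" if "w \<in> gverts G" for w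
    using side[OF Apex_in_gverts_mycielski MV_in_gverts_mycielski _ Apex_edge_mycielski] that r
    by simp
  then show False using split[of "r - 1"] e r by auto
qed

section \<open>The graphs \<open>M\<^sub>r\<^sub>1\<^sub>,\<^sub>r\<^sub>2(K\<^sub>2)\<close>\<close>

lemma gverts_K2: "gverts K2 = {0, 1}"
  by (simp add: K2_def gverts_def)

lemma gedges_K2: "gedges K2 = {{0, 1}}"
  by (simp add: K2_def gedges_def)

lemma finite_graph_mycielski2_K2: "r1 \<ge> 1 \<Longrightarrow> r2 \<ge> 1 \<Longrightarrow> finite_graph (mycielski2 r1 r2 K2)"
  unfolding mycielski2_def
  by (intro finite_graph_mycielski) (auto simp: finite_graph_def gverts_K2 gedges_K2)

lemma bottom_edge_mycielski2_K2:
  "r1 \<ge> 1 \<Longrightarrow> r2 \<ge> 1 \<Longrightarrow> {MV (MV 0 0) 0, MV (MV 1 0) 0} \<in> gedges (mycielski2 r1 r2 K2)"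
  unfolding mycielski2_def
  by (intro MV_edge_mycielski MV_in_gverts_mycielski) (auto simp: gverts_K2 gedges_K2)

lemma no_shift_labelling_mycielski2_1_r:
  assumes "r \<ge> 1"
  shows "\<not> shift_labelling (mycielski2 1 r K2) f"
proof -
  have "triangle (mycielski 1 K2) (MV 0 0) (MV 1 0) Apex"
    by (rule triangle_mycielski_1) (auto simp: gverts_K2 gedges_K2)
  from no_shift_labelling_mycielski_triangle[OF this assms] show ?thesis
    unfolding mycielski2_def .
qed

lemma no_shift_labelling_mycielski2_r_1:
  assumes "r \<ge> 1"
  shows "\<not> shift_labelling (mycielski2 r 1 K2) f"
proof
  assume "shift_labelling (mycielski2 r 1 K2) f"
  then have "bipartite (mycielski r K2)"
    unfolding mycielski2_def by (rule bipartite_of_shift_labelling_mycielski_1)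
  moreover have "\<not> bipartite (mycielski r K2)"
    using assms by (intro not_bipartite_mycielski[of 0 1]) (auto simp: gverts_K2 gedges_K2)
  ultimately show False by contradiction
qed

definition shift_label_M22 :: "nat myc_vertex myc_vertex \<Rightarrow> nat \<times> nat" where
  "shift_label_M22 x = (case x of Apex \<Rightarrow> (2, 4)
     | MV Apex j \<Rightarrow> (if j = 0 then (3, 4) else (3, 2))
     | MV (MV v i) j \<Rightarrow>
        (if v = 0 then (if i = 0 then (1, 2) else if j = 0 then (1, 3) else (4, 2))
         else (if i = 0 then (if j = 0 then (2, 1) else (4, 1)) else (if j = 0 then (2, 3) else (4, 1)))))"

lemma shift_label_M22_range:
  "fst (shift_label_M22 x) \<noteq> snd (shift_label_M22 x) \<and>
    fst (shift_label_M22 x) \<in> {1..4} \<and> snd (shift_label_M22 x) \<in> {1..4}"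
  by (auto simp: shift_label_M22_def split: myc_vertex.split)

lemma layer_pair_cases:
  fixes i j :: nat
  shows "i < 2 \<Longrightarrow> j < 2 \<Longrightarrow> i = j + 1 \<or> j = i + 1 \<or> (i = 0 \<and> j = 0)
    \<Longrightarrow> (i = 0 \<and> j = 0) \<or> (i = 0 \<and> j = 1) \<or> (i = 1 \<and> j = 0)"
  by auto

lemma K2_edge_cases: "{u, v} \<in> gedges K2 \<Longrightarrow> (u = 0 \<and> v = 1) \<or> (u = 1 \<and> v = 0)"
  by (auto simp: gedges_K2 doubleton_eq_iff)

lemma shift_adj_shift_label_M22:
  assumes "{x, y} \<in> gedges (mycielski2 2 2 K2)"
  shows "shift_adj (shift_label_M22 x) (shift_label_M22 y)"
  using assms unfolding mycielski2_def
proof (cases rule: mycielski_edgeE)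
  case (1 a b i j)
  note outer = this
  have ij: "(i = 0 \<and> j = 0) \<or> (i = 0 \<and> j = 1) \<or> (i = 1 \<and> j = 0)"
    using layer_pair_cases[OF outer(4-6)] .
  from outer(1) show ?thesis
  proof (cases rule: mycielski_edgeE)
    case (1 u v i' j')
    then show ?thesis
      using K2_edge_cases[OF 1(1)] layer_pair_cases[OF 1(4-6)] ij outer(7)
      by (auto simp: shift_label_M22_def shift_adj_def)
  next
    case (2 v)
    then show ?thesis
      using ij outer(7) by (auto simp: gverts_K2 shift_label_M22_def shift_adj_def)
  qed
next
  case (2 a)
  then show ?thesis
    by (auto simp: gverts_mycielski gverts_K2 shift_label_M22_def shift_adj_def less_2_cases_iff)
qed

lemma graph_hom_mycielski2_2_2_K2: "graph_hom shift_label_M22 (mycielski2 2 2 K2) (shift_graph 4)"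
  unfolding graph_hom_def
proof (intro conjI ballI allI impI)
  fix x show "shift_label_M22 x \<in> gverts (shift_graph 4)"
    using shift_label_M22_range[of x] by (intro shift_graph_vertexI) auto
next
  fix x y assume "{x, y} \<in> gedges (mycielski2 2 2 K2)"
  then show "{shift_label_M22 x, shift_label_M22 y} \<in> gedges (shift_graph 4)"
    using shift_label_M22_range[of x] shift_label_M22_range[of y]
    by (intro shift_graph_edgeI shift_adj_shift_label_M22) auto
qed

lemma graph_hom_mycielski2_K2_shift_graph_4:
  assumes "r1 \<ge> 2" "r2 \<ge> 2"
  shows "\<exists>f. graph_hom f (mycielski2 r1 r2 K2) (shift_graph 4)"
proof -
  have "graph_hom (map_myc_vertex (lower_layers (r1 - 2)))
      (mycielski r2 (mycielski r1 K2)) (mycielski r2 (mycielski 2 K2))"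
    using assms by (intro graph_hom_mycielski graph_hom_lower_layers) auto
  moreover have "graph_hom (lower_layers (r2 - 2))
      (mycielski r2 (mycielski 2 K2)) (mycielski 2 (mycielski 2 K2))"
    using assms by (intro graph_hom_lower_layers) auto
  ultimately show ?thesis
    using graph_hom_comp graph_hom_mycielski2_2_2_K2 unfolding mycielski2_def by blast
qed

theorem mainTheorem7:
  fixes r1 r2 :: nat
  assumes "r1 \<ge> 1" and "r2 \<ge> 1"
  shows "(psi_d_min (mycielski2 r1 r2 K2) = 2 \<longleftrightarrow> r1 \<ge> 2 \<and> r2 \<ge> 2)
    \<and> (r1 \<ge> 2 \<and> r2 \<ge> 2 \<longrightarrow>
         (\<exists>f. graph_hom f (mycielski2 r1 r2 K2) (shift_graph 4)))
    \<and> (\<forall>r m. r \<ge> 1 \<and> m \<ge> 1 \<longrightarrow>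
         \<not> (\<exists>f. graph_hom f (mycielski2 1 r K2) (shift_graph m)) \<and>
         \<not> (\<exists>f. graph_hom f (mycielski2 r 1 K2) (shift_graph m)))"
proof -
  have labelling_iff: "(\<exists>f. shift_labelling (mycielski2 r1 r2 K2) f) \<longleftrightarrow> r1 \<ge> 2 \<and> r2 \<ge> 2"
  proof
    assume "\<exists>f. shift_labelling (mycielski2 r1 r2 K2) f"
    then have "r1 \<noteq> 1" "r2 \<noteq> 1"
      using no_shift_labelling_mycielski2_1_r[OF assms(2)] no_shift_labelling_mycielski2_r_1[OF assms(1)]
      by auto
    then show "r1 \<ge> 2 \<and> r2 \<ge> 2" using assms by simp
  qed (use graph_hom_mycielski2_K2_shift_graph_4 shift_labelling_of_graph_hom in blast)
  have psi_iff: "psi_d_min (mycielski2 r1 r2 K2) = 2 \<longleftrightarrow> (\<exists>f. shift_labelling (mycielski2 r1 r2 K2) f)"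
    by (rule psi_d_min_eq_2_iff_shift_labelling[OF finite_graph_mycielski2_K2[OF assms]
          bottom_edge_mycielski2_K2[OF assms]]) simp
  have no_hom: "\<not> (\<exists>f. graph_hom f (mycielski2 1 r K2) (shift_graph m))"
    "\<not> (\<exists>f. graph_hom f (mycielski2 r 1 K2) (shift_graph m))" if "r \<ge> 1" for r m :: nat
    using no_shift_labelling_mycielski2_1_r[OF that] no_shift_labelling_mycielski2_r_1[OF that]
      shift_labelling_of_graph_hom by blast+
  show ?thesis
    using labelling_iff psi_iff no_hom graph_hom_mycielski2_K2_shift_graph_4 by blast
qed

end
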